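(* Let $\{R_\alpha\}$ be a collection of $\star$-rings and let $R=\prod_\alpha R_\alpha$ with componentwise involution. Then $R$ is weakly $\star$-clean if and only if each $R_\alpha$ is weakly $\star$-clean and at most one $R_\alpha$ is not $\star$-clean.
   Context: Rings are associative with identity. A $\star$-ring is a ring with a map $\star$ satisfying $(x+y)^\star=x^\star+y^\star$, $(xy)^\star=y^\star x^\star$, $(x^\star)^\star=x$. A projection is $p$ with $p^2=p=p^\star$; $P(R)$ is the set of projections, $U(R)$ the units. $R$ is $\star$-clean if every element is $u+p$ with $u\in U(R)$, $p\in P(R)$. An element $x$ is weakly $\star$-clean if $x=u+p$ or $x=u-p$ with $u\in U(R)$, $p\in P(R)$; $R$ is weakly $\star$-clean if all its elements are. *)

theory Defs
  imports "HOL-Algebra.Ring" "HOL-Library.FuncSet"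
begin

definition star_ring :: "('a, 'b) ring_scheme \<Rightarrow> ('a \<Rightarrow> 'a) \<Rightarrow> bool" where
  "star_ring R s \<longleftrightarrow> ring R \<and> s \<in> carrier R \<rightarrow> carrier R \<and>
     (\<forall>x\<in>carrier R. \<forall>y\<in>carrier R. s (x \<oplus>\<^bsub>R\<^esub> y) = s x \<oplus>\<^bsub>R\<^esub> s y) \<and>
     (\<forall>x\<in>carrier R. \<forall>y\<in>carrier R. s (x \<otimes>\<^bsub>R\<^esub> y) = s y \<otimes>\<^bsub>R\<^esub> s x) \<and>
     (\<forall>x\<in>carrier R. s (s x) = x)"

definition is_projection :: "('a, 'b) ring_scheme \<Rightarrow> ('a \<Rightarrow> 'a) \<Rightarrow> 'a \<Rightarrow> bool" where
  "is_projection R s p \<longleftrightarrow> p \<in> carrier R \<and> p \<otimes>\<^bsub>R\<^esub> p = p \<and> s p = p"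

definition star_clean :: "('a, 'b) ring_scheme \<Rightarrow> ('a \<Rightarrow> 'a) \<Rightarrow> bool" where
  "star_clean R s \<longleftrightarrow> (\<forall>x\<in>carrier R. \<exists>u\<in>Units R. \<exists>p. is_projection R s p \<and> x = u \<oplus>\<^bsub>R\<^esub> p)"

definition weakly_star_clean_elem :: "('a, 'b) ring_scheme \<Rightarrow> ('a \<Rightarrow> 'a) \<Rightarrow> 'a \<Rightarrow> bool" where
  "weakly_star_clean_elem R s x \<longleftrightarrow>
     (\<exists>u\<in>Units R. \<exists>p. is_projection R s p \<and> (x = u \<oplus>\<^bsub>R\<^esub> p \<or> x = u \<ominus>\<^bsub>R\<^esub> p))"

definition weakly_star_clean :: "('a, 'b) ring_scheme \<Rightarrow> ('a \<Rightarrow> 'a) \<Rightarrow> bool" where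
  "weakly_star_clean R s \<longleftrightarrow> (\<forall>x\<in>carrier R. weakly_star_clean_elem R s x)"

definition prod_ring :: "'i set \<Rightarrow> ('i \<Rightarrow> ('a, 'b) ring_scheme) \<Rightarrow> ('i \<Rightarrow> 'a) ring" where
  "prod_ring I R = \<lparr> carrier = (\<Pi>\<^sub>E i\<in>I. carrier (R i)),
     monoid.mult = (\<lambda>x y. \<lambda>i\<in>I. x i \<otimes>\<^bsub>R i\<^esub> y i),
     one = (\<lambda>i\<in>I. \<one>\<^bsub>R i\<^esub>),
     zero = (\<lambda>i\<in>I. \<zero>\<^bsub>R i\<^esub>),
     add = (\<lambda>x y. \<lambda>i\<in>I. x i \<oplus>\<^bsub>R i\<^esub> y i) \<rparr>"

definition prod_star :: "'i set \<Rightarrow> ('i \<Rightarrow> 'a \<Rightarrow> 'a) \<Rightarrow> ('i \<Rightarrow> 'a) \<Rightarrow> ('i \<Rightarrow> 'a)" where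
  "prod_star I s = (\<lambda>x. \<lambda>i\<in>I. s i (x i))"

end

theory Submission
  imports Defs "HOL-Algebra.Product_Groups"
begin

text \<open>
  Units, projections, sums and differences in the product are all computed componentwise, so an
  element of the product is weakly star-clean iff either all of its components are of the form
  u + p or all of them are of the form u - p. Since x = u - p iff -x = (-u) + p, every element of
  a star-clean ring has both forms; thus if every factor but R b is star-clean, the sign chosen
  in the b-th coordinate works in all coordinates. Conversely, if R i and R j (i \<noteq> j) contain
  elements a, b not of the form u + p, then the element with components a at i and -b at j
  is not weakly star-clean.
\<close>

definition star_clean_elem :: "('a, 'b) ring_scheme \<Rightarrow> ('a \<Rightarrow> 'a) \<Rightarrow> 'a \<Rightarrow> bool" where
  "star_clean_elem R s x \<longleftrightarrow> (\<exists>u\<in>Units R. \<exists>p. is_projection R s p \<and> x = u \<oplus>\<^bsub>R\<^esub> p)"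

definition star_clean_minus_elem :: "('a, 'b) ring_scheme \<Rightarrow> ('a \<Rightarrow> 'a) \<Rightarrow> 'a \<Rightarrow> bool" where
  "star_clean_minus_elem R s x \<longleftrightarrow> (\<exists>u\<in>Units R. \<exists>p. is_projection R s p \<and> x = u \<ominus>\<^bsub>R\<^esub> p)"

lemma star_clean_iff_elem: "star_clean R s \<longleftrightarrow> (\<forall>x\<in>carrier R. star_clean_elem R s x)"
  by (simp add: star_clean_def star_clean_elem_def)

lemma weakly_star_clean_elem_iff:
  "weakly_star_clean_elem R s x \<longleftrightarrow> star_clean_elem R s x \<or> star_clean_minus_elem R s x"
  by (auto simp: weakly_star_clean_elem_def star_clean_elem_def star_clean_minus_elem_def)

lemma (in ring) Units_a_inv_closed:
  assumes "u \<in> Units R" shows "\<ominus> u \<in> Units R"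
proof -
  have "\<ominus> u = \<ominus> \<one> \<otimes> u" using assms by (simp add: l_minus Units_closed)
  thus ?thesis using assms by (simp add: Units_m_closed Units_minus_one_closed)
qed

lemma (in ring) star_clean_minus_elem_iff_a_inv:
  assumes x: "x \<in> carrier R"
  shows "star_clean_minus_elem R s x \<longleftrightarrow> star_clean_elem R s (\<ominus> x)"
proof -
  have swap: "x = u \<ominus> p \<longleftrightarrow> \<ominus> x = \<ominus> u \<oplus> p" if "u \<in> carrier R" "p \<in> carrier R" for u p
  proof
    assume "x = u \<ominus> p" thus "\<ominus> x = \<ominus> u \<oplus> p" using that by (simp add: a_minus_def minus_add)
  next
    assume "\<ominus> x = \<ominus> u \<oplus> p"
    hence "\<ominus> (\<ominus> x) = \<ominus> (\<ominus> u \<oplus> p)" by simp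
    thus "x = u \<ominus> p" using that x by (simp add: a_minus_def minus_add)
  qed
  show ?thesis
  proof
    assume "star_clean_minus_elem R s x"
    then obtain u p where "u \<in> Units R" "is_projection R s p" "x = u \<ominus> p"
      by (auto simp: star_clean_minus_elem_def)
    thus "star_clean_elem R s (\<ominus> x)"
      unfolding star_clean_elem_def using swap Units_a_inv_closed
      by (metis Units_closed is_projection_def)
  next
    assume "star_clean_elem R s (\<ominus> x)"
    then obtain u p where "u \<in> Units R" "is_projection R s p" "\<ominus> x = u \<oplus> p"
      by (auto simp: star_clean_elem_def)
    thus "star_clean_minus_elem R s x"
      unfolding star_clean_minus_elem_def using swap Units_a_inv_closed
      by (metis Units_closed is_projection_def add.inv_inv)
  qed
qed

context
  fixes I :: "'i set" and R :: "'i \<Rightarrow> ('a, 'b) ring_scheme"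
begin

lemma prod_ring_carrier [simp]: "carrier (prod_ring I R) = (\<Pi>\<^sub>E i\<in>I. carrier (R i))"
  and prod_ring_add [simp]: "x \<oplus>\<^bsub>prod_ring I R\<^esub> y = (\<lambda>i\<in>I. x i \<oplus>\<^bsub>R i\<^esub> y i)"
  and prod_ring_mult [simp]: "x \<otimes>\<^bsub>prod_ring I R\<^esub> y = (\<lambda>i\<in>I. x i \<otimes>\<^bsub>R i\<^esub> y i)"
  and prod_ring_one [simp]: "\<one>\<^bsub>prod_ring I R\<^esub> = (\<lambda>i\<in>I. \<one>\<^bsub>R i\<^esub>)"
  by (simp_all add: prod_ring_def)

lemma add_monoid_prod_ring: "add_monoid (prod_ring I R) = product_group I (\<lambda>i. add_monoid (R i))"
  by (simp add: prod_ring_def product_group_def)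

lemma prod_ring_a_minus:
  assumes "\<And>i. i \<in> I \<Longrightarrow> ring (R i)" and "p \<in> carrier (prod_ring I R)"
  shows "x \<ominus>\<^bsub>prod_ring I R\<^esub> p = (\<lambda>i\<in>I. x i \<ominus>\<^bsub>R i\<^esub> p i)"
proof -
  have "\<ominus>\<^bsub>prod_ring I R\<^esub> p = inv\<^bsub>product_group I (\<lambda>i. add_monoid (R i))\<^esub> p"
    by (simp only: a_inv_def add_monoid_prod_ring)
  also have "\<dots> = (\<lambda>i\<in>I. inv\<^bsub>add_monoid (R i)\<^esub> p i)"
    using assms by (intro inv_product_group) (auto intro: abelian_group.a_group ring.is_abelian_group)
  also have "\<dots> = (\<lambda>i\<in>I. \<ominus>\<^bsub>R i\<^esub> p i)"
    by (simp add: a_inv_def)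
  finally have "\<ominus>\<^bsub>prod_ring I R\<^esub> p = (\<lambda>i\<in>I. \<ominus>\<^bsub>R i\<^esub> p i)" .
  thus ?thesis by (auto simp: a_minus_def)
qed

lemma Units_prod_ring_iff:
  "u \<in> Units (prod_ring I R) \<longleftrightarrow> u \<in> carrier (prod_ring I R) \<and> (\<forall>i\<in>I. u i \<in> Units (R i))"
proof
  assume "u \<in> Units (prod_ring I R)"
  then obtain v where u: "u \<in> carrier (prod_ring I R)" and v: "v \<in> carrier (prod_ring I R)"
    and vu: "v \<otimes>\<^bsub>prod_ring I R\<^esub> u = \<one>\<^bsub>prod_ring I R\<^esub>"
    and uv: "u \<otimes>\<^bsub>prod_ring I R\<^esub> v = \<one>\<^bsub>prod_ring I R\<^esub>"
    unfolding Units_def by blast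
  have "u i \<in> Units (R i)" if "i \<in> I" for i
  proof -
    have "v i \<otimes>\<^bsub>R i\<^esub> u i = \<one>\<^bsub>R i\<^esub>" "u i \<otimes>\<^bsub>R i\<^esub> v i = \<one>\<^bsub>R i\<^esub>"
      using fun_cong[OF vu, of i] fun_cong[OF uv, of i] that by simp_all
    thus ?thesis using u v that by (auto simp: Units_def)
  qed
  with u show "u \<in> carrier (prod_ring I R) \<and> (\<forall>i\<in>I. u i \<in> Units (R i))" by blast
next
  assume u: "u \<in> carrier (prod_ring I R) \<and> (\<forall>i\<in>I. u i \<in> Units (R i))"
  hence "\<forall>i\<in>I. \<exists>w. w \<in> carrier (R i) \<and> w \<otimes>\<^bsub>R i\<^esub> u i = \<one>\<^bsub>R i\<^esub> \<and> u i \<otimes>\<^bsub>R i\<^esub> w = \<one>\<^bsub>R i\<^esub>"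
    by (auto simp: Units_def)
  then obtain v where v: "\<forall>i\<in>I. v i \<in> carrier (R i) \<and>
      v i \<otimes>\<^bsub>R i\<^esub> u i = \<one>\<^bsub>R i\<^esub> \<and> u i \<otimes>\<^bsub>R i\<^esub> v i = \<one>\<^bsub>R i\<^esub>"
    by (auto dest!: bchoice)
  hence "restrict v I \<in> carrier (prod_ring I R)"
    "restrict v I \<otimes>\<^bsub>prod_ring I R\<^esub> u = \<one>\<^bsub>prod_ring I R\<^esub>"
    "u \<otimes>\<^bsub>prod_ring I R\<^esub> restrict v I = \<one>\<^bsub>prod_ring I R\<^esub>"
    by auto
  with u show "u \<in> Units (prod_ring I R)" unfolding Units_def by blast
qed

lemma is_projection_prod_ring_iff:
  "is_projection (prod_ring I R) (prod_star I s) p \<longleftrightarrow>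
     p \<in> carrier (prod_ring I R) \<and> (\<forall>i\<in>I. is_projection (R i) (s i) (p i))"
  unfolding is_projection_def prod_star_def
  by (auto simp: PiE_iff extensional_def) (metis restrict_apply')+

text \<open>Here f is \<oplus> or \<ominus> of the product and g the same operation of the factors.\<close>

lemma unit_projection_decomposition_prod_ring_iff:
  assumes f: "\<And>u p. p \<in> carrier (prod_ring I R) \<Longrightarrow> f u p = (\<lambda>i\<in>I. g i (u i) (p i))"
    and x: "x \<in> carrier (prod_ring I R)"
  shows "(\<exists>u\<in>Units (prod_ring I R). \<exists>p. is_projection (prod_ring I R) (prod_star I s) p \<and> x = f u p)
     \<longleftrightarrow> (\<forall>i\<in>I. \<exists>u\<in>Units (R i). \<exists>p. is_projection (R i) (s i) p \<and> x i = g i u p)"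
proof
  assume "\<exists>u\<in>Units (prod_ring I R). \<exists>p. is_projection (prod_ring I R) (prod_star I s) p \<and> x = f u p"
  thus "\<forall>i\<in>I. \<exists>u\<in>Units (R i). \<exists>p. is_projection (R i) (s i) p \<and> x i = g i u p"
    by (fastforce simp: Units_prod_ring_iff is_projection_prod_ring_iff f)
next
  assume "\<forall>i\<in>I. \<exists>u\<in>Units (R i). \<exists>p. is_projection (R i) (s i) p \<and> x i = g i u p"
  then obtain u p where up: "\<forall>i\<in>I. u i \<in> Units (R i) \<and> is_projection (R i) (s i) (p i) \<and> x i = g i (u i) (p i)"
    by metis
  have "restrict u I \<in> Units (prod_ring I R)"
    using up by (subst Units_prod_ring_iff) (auto simp: Units_def)
  moreover have p: "is_projection (prod_ring I R) (prod_star I s) (restrict p I)"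
    using up by (subst is_projection_prod_ring_iff) (auto simp: is_projection_def)
  moreover have "x = f (restrict u I) (restrict p I)"
    using up x p by (auto simp: f is_projection_def PiE_iff extensional_def)
  ultimately show "\<exists>u\<in>Units (prod_ring I R). \<exists>p. is_projection (prod_ring I R) (prod_star I s) p \<and> x = f u p"
    by blast
qed

lemma weakly_star_clean_elem_prod_ring_iff:
  assumes "\<And>i. i \<in> I \<Longrightarrow> ring (R i)" and x: "x \<in> carrier (prod_ring I R)"
  shows "weakly_star_clean_elem (prod_ring I R) (prod_star I s) x \<longleftrightarrow>
           (\<forall>i\<in>I. star_clean_elem (R i) (s i) (x i)) \<or> (\<forall>i\<in>I. star_clean_minus_elem (R i) (s i) (x i))"
proof -
  have "star_clean_elem (prod_ring I R) (prod_star I s) x \<longleftrightarrow> (\<forall>i\<in>I. star_clean_elem (R i) (s i) (x i))"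
    unfolding star_clean_elem_def by (rule unit_projection_decomposition_prod_ring_iff[OF _ x]) simp
  moreover have "star_clean_minus_elem (prod_ring I R) (prod_star I s) x \<longleftrightarrow>
      (\<forall>i\<in>I. star_clean_minus_elem (R i) (s i) (x i))"
    unfolding star_clean_minus_elem_def
    by (rule unit_projection_decomposition_prod_ring_iff[OF _ x]) (rule prod_ring_a_minus[OF assms(1)])
  ultimately show ?thesis by (simp add: weakly_star_clean_elem_iff)
qed

lemma ex_prod_ring_elem_with_components:
  assumes "\<And>i. i \<in> I \<Longrightarrow> ring (R i)" and "i \<in> I" "j \<in> I"
    and "a \<in> carrier (R i)" "b \<in> carrier (R j)" "i = j \<Longrightarrow> a = b"
  shows "\<exists>x\<in>carrier (prod_ring I R). x i = a \<and> x j = b"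
  by (rule bexI[of _ "\<lambda>k\<in>I. if k = i then a else if k = j then b else \<zero>\<^bsub>R k\<^esub>"])
     (use assms in \<open>auto simp: ring.ring_simprules(2)\<close>)

lemma weakly_star_clean_factor:
  assumes rings: "\<And>i. i \<in> I \<Longrightarrow> ring (R i)"
    and W: "weakly_star_clean (prod_ring I R) (prod_star I s)" and i: "i \<in> I"
  shows "weakly_star_clean (R i) (s i)"
  unfolding weakly_star_clean_def
proof
  fix a assume "a \<in> carrier (R i)"
  then obtain x where x: "x \<in> carrier (prod_ring I R)" "x i = a"
    using ex_prod_ring_elem_with_components[OF rings i i] by blast
  with W have "weakly_star_clean_elem (prod_ring I R) (prod_star I s) x"
    by (simp add: weakly_star_clean_def)
  hence "(\<forall>k\<in>I. star_clean_elem (R k) (s k) (x k)) \<or> (\<forall>k\<in>I. star_clean_minus_elem (R k) (s k) (x k))"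
    by (simp only: weakly_star_clean_elem_prod_ring_iff[OF rings x(1)])
  thus "weakly_star_clean_elem (R i) (s i) a"
    using i x(2) by (auto simp: weakly_star_clean_elem_iff)
qed

lemma weakly_star_clean_unique_non_star_clean:
  assumes rings: "\<And>i. i \<in> I \<Longrightarrow> ring (R i)"
    and W: "weakly_star_clean (prod_ring I R) (prod_star I s)" and i: "i \<in> I" and j: "j \<in> I"
    and "\<not> star_clean (R i) (s i)" "\<not> star_clean (R j) (s j)"
  shows "i = j"
proof (rule ccontr)
  assume "i \<noteq> j"
  interpret Rj: ring "R j" by (rule rings[OF j])
  obtain a b where a: "a \<in> carrier (R i)" "\<not> star_clean_elem (R i) (s i) a"
    and b: "b \<in> carrier (R j)" "\<not> star_clean_elem (R j) (s j) b"
    using assms(5,6) by (auto simp: star_clean_iff_elem)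
  have "\<ominus>\<^bsub>R j\<^esub> b \<in> carrier (R j)" using b(1) by simp
  then obtain x where x: "x \<in> carrier (prod_ring I R)" "x i = a" "x j = \<ominus>\<^bsub>R j\<^esub> b"
    using ex_prod_ring_elem_with_components[OF rings i j a(1)] \<open>i \<noteq> j\<close> by blast
  \<comment> \<open>x is not u + p because of its i-th component, and not u - p because of its j-th one.\<close>
  have "\<not> star_clean_minus_elem (R j) (s j) (x j)"
    using b x(3) by (simp add: Rj.star_clean_minus_elem_iff_a_inv)
  moreover have "weakly_star_clean_elem (prod_ring I R) (prod_star I s) x"
    using W x(1) by (simp add: weakly_star_clean_def)
  hence "(\<forall>k\<in>I. star_clean_elem (R k) (s k) (x k)) \<or> (\<forall>k\<in>I. star_clean_minus_elem (R k) (s k) (x k))"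
    by (simp only: weakly_star_clean_elem_prod_ring_iff[OF rings x(1)])
  ultimately show False using a(2) x(2) i j by blast
qed

lemma weakly_star_clean_prod_ringI:
  assumes rings: "\<And>i. i \<in> I \<Longrightarrow> ring (R i)"
    and weak: "\<forall>i\<in>I. weakly_star_clean (R i) (s i)" and clean: "\<forall>j\<in>I - {b}. star_clean (R j) (s j)"
  shows "weakly_star_clean (prod_ring I R) (prod_star I s)"
  unfolding weakly_star_clean_def
proof
  fix x assume x: "x \<in> carrier (prod_ring I R)"
  hence xi: "\<And>i. i \<in> I \<Longrightarrow> x i \<in> carrier (R i)" by auto
  have plus: "star_clean_elem (R j) (s j) (x j)" and minus: "star_clean_minus_elem (R j) (s j) (x j)"
    if j: "j \<in> I - {b}" for j
  proof -
    interpret Rj: ring "R j" using j rings by blast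
    show "star_clean_elem (R j) (s j) (x j)" "star_clean_minus_elem (R j) (s j) (x j)"
      using j clean xi by (auto simp: star_clean_iff_elem Rj.star_clean_minus_elem_iff_a_inv)
  qed
  show "weakly_star_clean_elem (prod_ring I R) (prod_star I s) x"
  proof (cases "b \<in> I \<and> star_clean_minus_elem (R b) (s b) (x b)")
    case True
    thus ?thesis using minus by (auto simp: weakly_star_clean_elem_prod_ring_iff[OF rings x])
  next
    case False
    hence "b \<in> I \<Longrightarrow> star_clean_elem (R b) (s b) (x b)"
      using weak xi by (auto simp: weakly_star_clean_def weakly_star_clean_elem_iff)
    thus ?thesis using plus by (auto simp: weakly_star_clean_elem_prod_ring_iff[OF rings x])
  qed
qed

end

theorem theorem4p11:
  fixes I :: "'i set" and R :: "'i \<Rightarrow> ('a, 'b) ring_scheme" and s :: "'i \<Rightarrow> 'a \<Rightarrow> 'a"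
  assumes "\<forall>i\<in>I. star_ring (R i) (s i)"
  shows "weakly_star_clean (prod_ring I R) (prod_star I s) \<longleftrightarrow>
           (\<forall>i\<in>I. weakly_star_clean (R i) (s i)) \<and>
           (\<forall>i\<in>I. \<forall>j\<in>I. \<not> star_clean (R i) (s i) \<and> \<not> star_clean (R j) (s j) \<longrightarrow> i = j)"
proof -
  have rings: "\<And>i. i \<in> I \<Longrightarrow> ring (R i)" using assms by (simp add: star_ring_def)
  show ?thesis
  proof
    assume W: "weakly_star_clean (prod_ring I R) (prod_star I s)"
    show "(\<forall>i\<in>I. weakly_star_clean (R i) (s i)) \<and>
        (\<forall>i\<in>I. \<forall>j\<in>I. \<not> star_clean (R i) (s i) \<and> \<not> star_clean (R j) (s j) \<longrightarrow> i = j)"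
      using weakly_star_clean_factor[OF rings W] weakly_star_clean_unique_non_star_clean[OF rings W]
      by blast
  next
    assume "(\<forall>i\<in>I. weakly_star_clean (R i) (s i)) \<and>
        (\<forall>i\<in>I. \<forall>j\<in>I. \<not> star_clean (R i) (s i) \<and> \<not> star_clean (R j) (s j) \<longrightarrow> i = j)"
    then have weak: "\<forall>i\<in>I. weakly_star_clean (R i) (s i)"
      and unique: "\<forall>i\<in>I. \<forall>j\<in>I. \<not> star_clean (R i) (s i) \<and> \<not> star_clean (R j) (s j) \<longrightarrow> i = j"
      by blast+
    obtain b where clean: "\<forall>j\<in>I - {b}. star_clean (R j) (s j)"
    proof (cases "\<exists>b\<in>I. \<not> star_clean (R b) (s b)")
      case True
      with unique that show thesis by blast
    next
      case False
      with that show thesis by blast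
    qed
    show "weakly_star_clean (prod_ring I R) (prod_star I s)"
      by (rule weakly_star_clean_prod_ringI[OF rings weak clean])
  qed
qed

end
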